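(* Let $\Omega\subset\mathbb{C}$ be a domain, $D=(\mu,\mathcal{A},\mathcal{B},\mathcal{F})\in\mathcal{BV}(\Omega)$ with $\|\mu\|_\infty<1$, and suppose there is a $C^1$ diffeomorphism $\Phi:\Omega\to\Omega'$ onto a domain $\Omega'$ satisfying $\Phi_{\bar z}=\mu\,\Phi_z$ on $\Omega$. Let $\Psi:=\Phi^{-1}:\Omega'\to\Omega$, with coordinate $\zeta$ on $\Omega'$. Then $\Psi^*D=(\mu',\mathcal{A}',\mathcal{B}',\mathcal{F}')$ has $\mu'\equiv0$, i.e. it is the Vekua equation $w_{\bar\zeta}+\mathcal{A}'w+\mathcal{B}'\bar w=\mathcal{F}'$ on $\Omega'$, with \[ \mathcal{A}'=\overline{\Psi_\zeta}\,(\mathcal{A}\circ\Psi),\qquad \mathcal{B}'=\overline{\Psi_\zeta}\,(\mathcal{B}\circ\Psi),\qquad \mathcal{F}'=\overline{\Psi_\zeta}\,(\mathcal{F}\circ\Psi). \] In particular $D$ is diffeomorphism-equivalent to a classical Vekua equation.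
   Context: A domain is an open connected subset of $\mathbb{C}$. $\mathcal{BV}(\Omega)$ is the set of quadruples $(\mu,\mathcal{A},\mathcal{B},\mathcal{F})$ of continuous complex functions on $\Omega$ with $|\mu|<1$ pointwise; the associated equation is $w_{\bar z}-\mu w_z+\mathcal{A}w+\mathcal{B}\bar w=\mathcal{F}$. A diffeomorphism $\Phi:\Omega_1\to\Omega_2$ is a $C^1$ bijection with $C^1$ inverse and Jacobian $J=|\Phi_z|^2-|\Phi_{\bar z}|^2>0$. For $D\in\mathcal{BV}(\Omega_2)$ the pullback $\Phi^*D=(\mu^*,\mathcal{A}^*,\mathcal{B}^*,\mathcal{F}^* )$ is given, with $K:=\Phi_z+(\mu\circ\Phi)\overline{\Phi_{\bar z}}$, by $\mu^*=(\Phi_{\bar z}+(\mu\circ\Phi)\overline{\Phi_z})/K$, $\mathcal{A}^*=J(\mathcal{A}\circ\Phi)/K$, $\mathcal{B}^*=J(\mathcal{B}\circ\Phi)/K$, $\mathcal{F}^*=J(\mathcal{F}\circ\Phi)/K$; $D_1\sim_d D_2$ means $D_1=\Phi^*D_2$ for some diffeomorphism $\Phi$. *)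

theory Defs
  imports "HOL-Analysis.Analysis"
begin

definition wirt_z :: "(complex \<Rightarrow> complex) \<Rightarrow> complex \<Rightarrow> complex" where
  "wirt_z f z = (frechet_derivative f (at z) 1 - \<i> * frechet_derivative f (at z) \<i>) / 2"

definition wirt_zbar :: "(complex \<Rightarrow> complex) \<Rightarrow> complex \<Rightarrow> complex" where
  "wirt_zbar f z = (frechet_derivative f (at z) 1 + \<i> * frechet_derivative f (at z) \<i>) / 2"

definition is_domain :: "complex set \<Rightarrow> bool" where
  "is_domain S \<longleftrightarrow> open S \<and> connected S"

definition C1_on :: "complex set \<Rightarrow> (complex \<Rightarrow> complex) \<Rightarrow> bool" where
  "C1_on S f \<longleftrightarrow> (\<forall>z\<in>S. f differentiable (at z))
     \<and> continuous_on S (wirt_z f) \<and> continuous_on S (wirt_zbar f)"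

definition jacobian :: "(complex \<Rightarrow> complex) \<Rightarrow> complex \<Rightarrow> real" where
  "jacobian f z = (cmod (wirt_z f z))\<^sup>2 - (cmod (wirt_zbar f z))\<^sup>2"

definition diffeo :: "(complex \<Rightarrow> complex) \<Rightarrow> complex set \<Rightarrow> complex set \<Rightarrow> bool" where
  "diffeo \<Phi> S T \<longleftrightarrow> bij_betw \<Phi> S T \<and> C1_on S \<Phi> \<and> C1_on T (inv_into S \<Phi>)
     \<and> (\<forall>z\<in>S. jacobian \<Phi> z > 0)"

type_synonym bv_data =
  "(complex \<Rightarrow> complex) \<times> (complex \<Rightarrow> complex) \<times> (complex \<Rightarrow> complex) \<times> (complex \<Rightarrow> complex)"

definition BV :: "complex set \<Rightarrow> bv_data set" where
  "BV S = {(\<mu>, A, B, F). continuous_on S \<mu> \<and> continuous_on S A \<and> continuous_on S B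
            \<and> continuous_on S F \<and> (\<forall>z\<in>S. cmod (\<mu> z) < 1)}"

definition pullback :: "(complex \<Rightarrow> complex) \<Rightarrow> bv_data \<Rightarrow> bv_data" where
  "pullback \<Phi> D = (case D of (\<mu>, A, B, F) \<Rightarrow>
     let K = (\<lambda>z. wirt_z \<Phi> z + \<mu> (\<Phi> z) * cnj (wirt_zbar \<Phi> z)) in
     ((\<lambda>z. (wirt_zbar \<Phi> z + \<mu> (\<Phi> z) * cnj (wirt_z \<Phi> z)) / K z),
      (\<lambda>z. of_real (jacobian \<Phi> z) * A (\<Phi> z) / K z),
      (\<lambda>z. of_real (jacobian \<Phi> z) * B (\<Phi> z) / K z),
      (\<lambda>z. of_real (jacobian \<Phi> z) * F (\<Phi> z) / K z)))"

text \<open>Equality of data on a set (the data are only meaningful on the domain).\<close>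
definition data_eq_on :: "complex set \<Rightarrow> bv_data \<Rightarrow> bv_data \<Rightarrow> bool" where
  "data_eq_on S D1 D2 \<longleftrightarrow> (case D1 of (\<mu>1, A1, B1, F1) \<Rightarrow> case D2 of (\<mu>2, A2, B2, F2) \<Rightarrow>
     (\<forall>z\<in>S. \<mu>1 z = \<mu>2 z \<and> A1 z = A2 z \<and> B1 z = B2 z \<and> F1 z = F2 z))"

definition d_equiv :: "complex set \<Rightarrow> bv_data \<Rightarrow> complex set \<Rightarrow> bv_data \<Rightarrow> bool" where
  "d_equiv S1 D1 S2 D2 \<longleftrightarrow> (\<exists>\<Phi>. diffeo \<Phi> S1 S2 \<and> data_eq_on S1 D1 (pullback \<Phi> D2))"

end

(* Differentiating Psi o Phi = id in Wirtinger form gives Psi_zeta = cnj Phi_z / J and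
   Psi_zetabar = - Phi_zbar / J at Phi z, with J the Jacobian of Phi. So the Beltrami equation
   Phi_zbar = mu Phi_z becomes Psi_zetabar = - (mu o Psi) cnj Psi_zeta. For such a map the numerator
   of the pulled-back coefficient mu' vanishes, and the Jacobian of Psi is cnj Psi_zeta times the
   denominator K; this gives A' = cnj Psi_zeta (A o Psi), etc. Pulling these Vekua data back along
   Phi gives D again. *)

theory Submission
  imports Defs
begin

lemma frechet_derivative_eq_wirtinger:
  assumes "f differentiable at z"
  shows "frechet_derivative f (at z) h = wirt_z f z * h + wirt_zbar f z * cnj h"
proof -
  let ?L = "frechet_derivative f (at z)"
  have lin: "linear ?L"
    using assms frechet_derivative_works has_derivative_linear by blast
  have h: "h = Re h *\<^sub>R 1 + Im h *\<^sub>R \<i>"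
    by (simp add: complex_eq_iff)
  have "?L h = Re h *\<^sub>R ?L 1 + Im h *\<^sub>R ?L \<i>"
    by (subst h) (simp add: linear_add[OF lin] linear_scale[OF lin])
  also have "\<dots> = wirt_z f z * h + wirt_zbar f z * cnj h"
    unfolding wirt_z_def wirt_zbar_def
    by (subst (3 4) h) (simp add: scaleR_conv_of_real field_simps)
  finally show ?thesis .
qed

lemma of_real_jacobian:
  "complex_of_real (jacobian f z) =
     wirt_z f z * cnj (wirt_z f z) - wirt_zbar f z * cnj (wirt_zbar f z)"
  unfolding jacobian_def of_real_diff complex_norm_square ..

lemma wirt_z_nonzero_if_jacobian_pos:
  assumes "jacobian f z > 0"
  shows "wirt_z f z \<noteq> 0"
  using assms unfolding jacobian_def by auto

lemma C1_on_cong: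
  assumes "open S" "\<And>z. z \<in> S \<Longrightarrow> f z = g z" "C1_on S f"
  shows "C1_on S g"
proof -
  have diff: "f differentiable at z" if "z \<in> S" for z
    using assms(3) that unfolding C1_on_def by blast
  have deriv: "frechet_derivative f (at z) = frechet_derivative g (at z)" if "z \<in> S" for z
    using frechet_derivative_transform_within_open[OF diff[OF that] assms(1) that] assms(2)
    by blast
  have "g differentiable at z" if "z \<in> S" for z
    using diff[OF that] assms(1,2) that has_derivative_transform_within_open
    unfolding differentiable_def by blast
  moreover have "continuous_on S (wirt_z g)" "continuous_on S (wirt_zbar g)"
    using assms(3) deriv unfolding C1_on_def wirt_z_def wirt_zbar_def
    by (auto cong: continuous_on_cong)
  ultimately show ?thesis
    unfolding C1_on_def by blast
qed

lemma frechet_derivative_left_inverse: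
  assumes "open S" "z \<in> S" "f differentiable at z" "g differentiable at (f z)"
    and "\<And>x. x \<in> S \<Longrightarrow> g (f x) = x"
  shows "frechet_derivative g (at (f z)) (frechet_derivative f (at z) h) = h"
proof -
  have "((g \<circ> f) has_derivative
          (frechet_derivative g (at (f z)) \<circ> frechet_derivative f (at z))) (at z)"
    by (rule diff_chain_at) (use assms(3,4) frechet_derivative_works in blast)+
  moreover have "((g \<circ> f) has_derivative id) (at z)"
    using has_derivative_transform_within_open[OF has_derivative_id assms(1,2), of "g \<circ> f"]
      assms(5) by (simp add: id_def)
  ultimately have "frechet_derivative g (at (f z)) \<circ> frechet_derivative f (at z) = id"
    using has_derivative_unique by blast
  then show ?thesis
    unfolding fun_eq_iff comp_def id_def by (rule spec)
qed

lemma wirtinger_left_inverse: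
  assumes "open S" "z \<in> S" "f differentiable at z" "g differentiable at (f z)"
    and "\<And>x. x \<in> S \<Longrightarrow> g (f x) = x"
    and "jacobian f z \<noteq> 0"
  shows "wirt_z g (f z) = cnj (wirt_z f z) / jacobian f z"
    and "wirt_zbar g (f z) = - wirt_zbar f z / jacobian f z"
proof -
  define a b c d where "a = wirt_z f z" and "b = wirt_zbar f z"
    and "c = wirt_z g (f z)" and "d = wirt_zbar g (f z)"
  \<comment> \<open>P and Q are the coefficients of h and cnj h in D g (f z) \<circ> D f z = id.\<close>
  define P Q where "P = c * a + d * cnj b" and "Q = c * b + d * cnj a"
  have "P * h + Q * cnj h = h" for h
    using frechet_derivative_left_inverse[OF assms(1-5), of h]
    unfolding frechet_derivative_eq_wirtinger[OF assms(3)]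
      frechet_derivative_eq_wirtinger[OF assms(4)] a_def b_def c_def d_def P_def Q_def
    by (simp add: algebra_simps)
  from this[of 1] this[of \<i>] have "P + Q = 1" "\<i> * (P - Q) = \<i> * 1"
    by (simp_all add: algebra_simps)
  then have "P + Q = 1" "P - Q = 1"
    by simp_all
  then have P: "P = 1" and Q: "Q = 0"
    by (simp_all add: algebra_simps eq_diff_eq)
  have J: "complex_of_real (jacobian f z) = a * cnj a - b * cnj b"
    unfolding of_real_jacobian a_def b_def ..
  have "c * (a * cnj a - b * cnj b) = cnj a * P - cnj b * Q"
    and "d * (a * cnj a - b * cnj b) = a * Q - b * P"
    unfolding P_def Q_def by algebra+
  then show "c = cnj a / jacobian f z" and "d = - b / jacobian f z"
    using assms(6) unfolding P Q J[symmetric] by (simp_all add: field_simps)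
qed

lemma jacobian_left_inverse:
  assumes "open S" "z \<in> S" "f differentiable at z" "g differentiable at (f z)"
    and "\<And>x. x \<in> S \<Longrightarrow> g (f x) = x"
    and "jacobian f z \<noteq> 0"
  shows "jacobian g (f z) = 1 / jacobian f z"
proof -
  define J where "J = jacobian f z"
  have "jacobian g (f z) = (cmod (cnj (wirt_z f z) / J))\<^sup>2 - (cmod (- wirt_zbar f z / J))\<^sup>2"
    unfolding J_def by (simp only: jacobian_def[of g] wirtinger_left_inverse[OF assms])
  also have "\<dots> = ((cmod (wirt_z f z))\<^sup>2 - (cmod (wirt_zbar f z))\<^sup>2) / J\<^sup>2"
    by (simp add: norm_divide power_divide diff_divide_distrib)
  also have "\<dots> = J / J\<^sup>2"
    unfolding J_def jacobian_def ..
  also have "\<dots> = 1 / J"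
    using assms(6) unfolding J_def by (simp add: power2_eq_square)
  finally show ?thesis
    unfolding J_def .
qed

lemma wirtinger_inv_into:
  assumes "open S" "diffeo f S T" "z \<in> S"
  shows "wirt_z (inv_into S f) (f z) = cnj (wirt_z f z) / jacobian f z"
    and "wirt_zbar (inv_into S f) (f z) = - wirt_zbar f z / jacobian f z"
    and "jacobian (inv_into S f) (f z) = 1 / jacobian f z"
proof -
  have bij: "bij_betw f S T"
    using assms(2) unfolding diffeo_def by blast
  have "f differentiable at z" and "inv_into S f differentiable at (f z)"
    and "jacobian f z \<noteq> 0"
    using assms bij_betw_apply[OF bij] unfolding diffeo_def C1_on_def by auto
  moreover have "\<And>x. x \<in> S \<Longrightarrow> inv_into S f (f x) = x"
    using bij bij_betw_inv_into_left by metis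
  ultimately show "wirt_z (inv_into S f) (f z) = cnj (wirt_z f z) / jacobian f z"
    and "wirt_zbar (inv_into S f) (f z) = - wirt_zbar f z / jacobian f z"
    and "jacobian (inv_into S f) (f z) = 1 / jacobian f z"
    using wirtinger_left_inverse[OF assms(1,3)] jacobian_left_inverse[OF assms(1,3)] by simp_all
qed

lemma diffeo_inv_into:
  assumes "open S" "diffeo f S T"
  shows "diffeo (inv_into S f) T S"
proof -
  let ?g = "inv_into S f"
  have bij: "bij_betw f S T" and C1f: "C1_on S f" and C1g: "C1_on T ?g"
    and jac: "\<And>z. z \<in> S \<Longrightarrow> jacobian f z > 0"
    using assms(2) unfolding diffeo_def by auto
  have "C1_on S (inv_into T ?g)"
    using C1_on_cong[OF assms(1) _ C1f] inv_into_inv_into_eq[OF bij] by metis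
  moreover have "jacobian ?g (f z) > 0" if "z \<in> S" for z
    using wirtinger_inv_into(3)[OF assms that] jac[OF that] by simp
  with bij_betw_imp_surj_on[OF bij] have "\<forall>\<zeta>\<in>T. jacobian ?g \<zeta> > 0"
    by blast
  ultimately show ?thesis
    using bij C1g unfolding diffeo_def by (simp add: bij_betw_inv_into)
qed

definition vekua_form :: "(complex \<Rightarrow> complex) \<Rightarrow> bv_data \<Rightarrow> bv_data" where
  "vekua_form \<Psi> D = (case D of (_, A, B, F) \<Rightarrow>
     (\<lambda>_. 0, \<lambda>\<zeta>. cnj (wirt_z \<Psi> \<zeta>) * A (\<Psi> \<zeta>), \<lambda>\<zeta>. cnj (wirt_z \<Psi> \<zeta>) * B (\<Psi> \<zeta>),
      \<lambda>\<zeta>. cnj (wirt_z \<Psi> \<zeta>) * F (\<Psi> \<zeta>)))"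

lemma data_eq_on_sym: "data_eq_on S D1 D2 \<Longrightarrow> data_eq_on S D2 D1"
  unfolding data_eq_on_def by (auto split: prod.splits)

lemma data_eq_on_trans:
  "data_eq_on S D1 D2 \<Longrightarrow> data_eq_on S D2 D3 \<Longrightarrow> data_eq_on S D1 D3"
  unfolding data_eq_on_def by (auto split: prod.splits)

lemma BV_data_eq_on:
  assumes "data_eq_on S D1 D2" "D2 \<in> BV S"
  shows "D1 \<in> BV S"
  using assms unfolding data_eq_on_def BV_def by (auto split: prod.splits cong: continuous_on_cong)

lemma pullback_data_eq_on:
  assumes "f ` S \<subseteq> T" "data_eq_on T D1 D2"
  shows "data_eq_on S (pullback f D1) (pullback f D2)"
  using assms unfolding data_eq_on_def pullback_def Let_def by (auto split: prod.splits)

lemma vekua_form_in_BV: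
  assumes "C1_on T g" "g ` T \<subseteq> S" "(\<mu>, A, B, F) \<in> BV S"
  shows "vekua_form g (\<mu>, A, B, F) \<in> BV T"
proof -
  have "continuous_on T g"
    using assms(1) unfolding C1_on_def
    by (meson differentiable_at_imp_differentiable_on differentiable_imp_continuous_on)
  moreover have "continuous_on T (\<lambda>\<zeta>. cnj (wirt_z g \<zeta>))"
    using assms(1) unfolding C1_on_def by (intro continuous_on_cnj) blast
  ultimately have "continuous_on T (\<lambda>\<zeta>. cnj (wirt_z g \<zeta>) * G (g \<zeta>))"
    if "continuous_on S G" for G
    using continuous_on_compose2[OF that _ assms(2)] by (intro continuous_on_mult) auto
  then show ?thesis
    using assms(3) unfolding vekua_form_def BV_def by simp
qed

lemma pullback_conj_beltrami:
  assumes "\<forall>\<zeta>\<in>T. wirt_zbar g \<zeta> = - \<mu> (g \<zeta>) * cnj (wirt_z g \<zeta>)"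
    and "\<forall>\<zeta>\<in>T. jacobian g \<zeta> \<noteq> 0"
  shows "data_eq_on T (pullback g (\<mu>, A, B, F)) (vekua_form g (\<mu>, A, B, F))"
proof -
  have "wirt_z g \<zeta> + \<mu> (g \<zeta>) * cnj (wirt_zbar g \<zeta>) \<noteq> 0
    \<and> of_real (jacobian g \<zeta>) = cnj (wirt_z g \<zeta>) * (wirt_z g \<zeta> + \<mu> (g \<zeta>) * cnj (wirt_zbar g \<zeta>))"
    if "\<zeta> \<in> T" for \<zeta>
  proof -
    define p m where "p = wirt_z g \<zeta>" and "m = \<mu> (g \<zeta>)"
    have "wirt_zbar g \<zeta> = - m * cnj p"
      using assms(1) that unfolding p_def m_def by blast
    then have "of_real (jacobian g \<zeta>) = cnj p * (p + m * cnj (wirt_zbar g \<zeta>))"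
      unfolding of_real_jacobian p_def[symmetric] by (simp add: algebra_simps)
    with assms(2) that show ?thesis
      unfolding p_def m_def by auto
  qed
  then show ?thesis
    using assms(1) unfolding data_eq_on_def pullback_def vekua_form_def Let_def by simp
qed

lemma inv_into_conj_beltrami:
  assumes "open \<Omega>" "diffeo \<Phi> \<Omega> \<Omega>'" "\<forall>z\<in>\<Omega>. wirt_zbar \<Phi> z = \<mu> z * wirt_z \<Phi> z"
  shows "\<forall>\<zeta>\<in>\<Omega>'. wirt_zbar (inv_into \<Omega> \<Phi>) \<zeta> =
                - \<mu> (inv_into \<Omega> \<Phi> \<zeta>) * cnj (wirt_z (inv_into \<Omega> \<Phi>) \<zeta>)"
proof
  have bij: "bij_betw \<Phi> \<Omega> \<Omega>'"
    using assms(2) unfolding diffeo_def by blast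
  fix \<zeta> assume "\<zeta> \<in> \<Omega>'"
  then obtain z where z: "z \<in> \<Omega>" and \<zeta>: "\<zeta> = \<Phi> z"
    using bij by (metis bij_betw_imp_surj_on imageE)
  have "inv_into \<Omega> \<Phi> \<zeta> = z"
    unfolding \<zeta> using bij bij_betw_inv_into_left z by metis
  then show "wirt_zbar (inv_into \<Omega> \<Phi>) \<zeta> =
               - \<mu> (inv_into \<Omega> \<Phi> \<zeta>) * cnj (wirt_z (inv_into \<Omega> \<Phi>) \<zeta>)"
    using wirtinger_inv_into(1,2)[OF assms(1,2) z] assms(3) z unfolding \<zeta> by simp
qed

lemma pullback_vekua_form_inv_into:
  assumes "open \<Omega>" "diffeo \<Phi> \<Omega> \<Omega>'" "\<forall>z\<in>\<Omega>. wirt_zbar \<Phi> z = \<mu> z * wirt_z \<Phi> z"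
  shows "data_eq_on \<Omega> (\<mu>, A, B, F) (pullback \<Phi> (vekua_form (inv_into \<Omega> \<Phi>) (\<mu>, A, B, F)))"
proof -
  have "inv_into \<Omega> \<Phi> (\<Phi> z) = z \<and> wirt_z \<Phi> z \<noteq> 0 \<and> wirt_zbar \<Phi> z / wirt_z \<Phi> z = \<mu> z
    \<and> of_real (jacobian \<Phi> z) * cnj (wirt_z (inv_into \<Omega> \<Phi>) (\<Phi> z)) = wirt_z \<Phi> z"
    if z: "z \<in> \<Omega>" for z
  proof -
    have "jacobian \<Phi> z > 0"
      using assms(2) z unfolding diffeo_def by blast
    then have "wirt_z \<Phi> z \<noteq> 0" and "jacobian \<Phi> z \<noteq> 0"
      using wirt_z_nonzero_if_jacobian_pos by auto
    moreover have "inv_into \<Omega> \<Phi> (\<Phi> z) = z"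
      using assms(2) z bij_betw_inv_into_left unfolding diffeo_def by metis
    ultimately show ?thesis
      using wirtinger_inv_into(1)[OF assms(1,2) z] assms(3) z by simp
  qed
  then show ?thesis
    unfolding data_eq_on_def pullback_def vekua_form_def Let_def by (simp add: mult.assoc[symmetric])
qed

theorem proposition6p1:
  fixes \<Omega> \<Omega>' :: "complex set" and \<mu> A B F \<Phi> :: "complex \<Rightarrow> complex"
  assumes "is_domain \<Omega>" and "is_domain \<Omega>'"
    and "(\<mu>, A, B, F) \<in> BV \<Omega>"
    and "\<exists>k<1. \<forall>z\<in>\<Omega>. cmod (\<mu> z) \<le> k"
    and "diffeo \<Phi> \<Omega> \<Omega>'"
    and "\<forall>z\<in>\<Omega>. wirt_zbar \<Phi> z = \<mu> z * wirt_z \<Phi> z"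
  shows "let \<Psi> = inv_into \<Omega> \<Phi> in
    diffeo \<Psi> \<Omega>' \<Omega> \<and>
    (case pullback \<Psi> (\<mu>, A, B, F) of (\<mu>', A', B', F') \<Rightarrow>
       (\<forall>\<zeta>\<in>\<Omega>'. \<mu>' \<zeta> = 0
          \<and> A' \<zeta> = cnj (wirt_z \<Psi> \<zeta>) * A (\<Psi> \<zeta>)
          \<and> B' \<zeta> = cnj (wirt_z \<Psi> \<zeta>) * B (\<Psi> \<zeta>)
          \<and> F' \<zeta> = cnj (wirt_z \<Psi> \<zeta>) * F (\<Psi> \<zeta>))) \<and>
    pullback \<Psi> (\<mu>, A, B, F) \<in> BV \<Omega>' \<and>
    d_equiv \<Omega> (\<mu>, A, B, F) \<Omega>' (pullback \<Psi> (\<mu>, A, B, F))"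
proof -
  define \<Psi> where "\<Psi> = inv_into \<Omega> \<Phi>"
  let ?D = "(\<mu>, A, B, F)"
  have "open \<Omega>"
    using assms(1) unfolding is_domain_def by blast
  have diffeo_\<Psi>: "diffeo \<Psi> \<Omega>' \<Omega>"
    unfolding \<Psi>_def using diffeo_inv_into[OF \<open>open \<Omega>\<close> assms(5)] .
  then have "\<Psi> ` \<Omega>' \<subseteq> \<Omega>" and "C1_on \<Omega>' \<Psi>" and "\<forall>\<zeta>\<in>\<Omega>'. jacobian \<Psi> \<zeta> \<noteq> 0"
    unfolding diffeo_def by (auto simp: bij_betw_def)
  have vekua: "data_eq_on \<Omega>' (pullback \<Psi> ?D) (vekua_form \<Psi> ?D)"
    using pullback_conj_beltrami inv_into_conj_beltrami[OF \<open>open \<Omega>\<close> assms(5,6)]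
      \<open>\<forall>\<zeta>\<in>\<Omega>'. jacobian \<Psi> \<zeta> \<noteq> 0\<close> unfolding \<Psi>_def by blast
  have BV: "pullback \<Psi> ?D \<in> BV \<Omega>'"
    using BV_data_eq_on[OF vekua vekua_form_in_BV] \<open>C1_on \<Omega>' \<Psi>\<close> \<open>\<Psi> ` \<Omega>' \<subseteq> \<Omega>\<close> assms(3)
    by blast
  have "\<Phi> ` \<Omega> \<subseteq> \<Omega>'"
    using assms(5) unfolding diffeo_def bij_betw_def by blast
  then have "data_eq_on \<Omega> ?D (pullback \<Phi> (pullback \<Psi> ?D))"
    using data_eq_on_trans[OF pullback_vekua_form_inv_into[OF \<open>open \<Omega>\<close> assms(5,6)]]
      data_eq_on_sym[OF pullback_data_eq_on[OF _ vekua]] unfolding \<Psi>_def by blast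
  then have equiv: "d_equiv \<Omega> ?D \<Omega>' (pullback \<Psi> ?D)"
    using assms(5) unfolding d_equiv_def by blast
  show ?thesis
    using diffeo_\<Psi> vekua BV equiv
    unfolding \<Psi>_def[symmetric] Let_def data_eq_on_def vekua_form_def
    by (auto split: prod.splits)
qed

end
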